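(* Let $n\ge3$, let $u^+\in C^{0,1}(\overline{B_1^+})$ and $u^-\in C^{0,1}(\overline{B_1^-})$ be positive functions with $u^+=u^-$ on $B_1\cap\{x_n=0\}$. Suppose $u^+$ is a viscosity supersolution of $\lambda(A_u)\in\partial\Gamma_2^+$ in $B_1^+$ with $-\partial u/\partial x_n=0$ on $B_1\cap\{x_n=0\}$, and $u^-$ is a viscosity supersolution of $\lambda(A_u)\in\partial\Gamma_2^+$ in $B_1^-$ with $\partial u/\partial x_n=0$ on $B_1\cap\{x_n=0\}$. Then the function $u=u^+$ on $\{x_n\ge0\}$, $u=u^-$ on $\{x_n<0\}$, is a $C^{0,1}$ viscosity supersolution of $\lambda(A_u)\in\partial\Gamma_2^+$ in $B_1$.
   Context: $B_1^\pm=B_1(0)\cap\{\pm x_n>0\}$ in $\mathbb{R}^n$ with Euclidean metric. For positive $C^2$ $u$, $A_u=-\frac2{n-2}\frac{\nabla^2u}{u}+\frac{2n}{(n-2)^2}\frac{\mathrm du\otimes\mathrm du}{u^2}-\frac2{(n-2)^2}\frac{|\nabla u|^2}{u^2}I$ (Schouten tensor of $u^{4/(n-2)}|\mathrm dx|^2$ up to the conformal factor), $\lambda(A_u)$ its eigenvalues, $\Gamma_2^+=\{\lambda:\sum\lambda_i>0,\sum_{i<j}\lambda_i\lambda_j>0\}$. Viscosity supersolution in an open set $U$: $u$ positive continuous, and whenever $\psi\in C^2$, $u-\psi\ge0$ near $\bar x\in U$ with $(u-\psi)(\bar x)=0$, one has $\lambda(A_\psi)(\bar x)\in\overline{\Gamma_2^+}$.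 Supersolution in $B_1^+$ with $-\partial u/\partial x_n=0$ on the flat boundary $\Gamma=B_1\cap\{x_n=0\}$: $u\in C^0(B_1^+\cup\Gamma)$ is a supersolution in $B_1^+$ and, whenever $\psi\in C^2(B_1^+\cup\Gamma)$ and $u-\psi$ has a local minimum zero at $\bar x\in\Gamma$, either $\lambda(A_\psi)(\bar x)\in\overline{\Gamma_2^+}$ or $-\partial_{x_n}\psi(\bar x)\ge0$. For $B_1^-$ with $\partial u/\partial x_n=0$: same, with the alternative $\partial_{x_n}\psi(\bar x)\ge0$. *)

theory Defs
  imports "HOL-Analysis.Analysis"
begin

text \<open>Points of R^n are vectors real^'n, the index type carrying a linear order
so that the last coordinate x_n is available.\<close>

definition lastidx :: "'n::{finite,linorder}" where
  "lastidx = Max UNIV"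

definition ball_plus :: "(real^'n::{finite,linorder}) set" where
  "ball_plus = {x \<in> ball 0 1. x $ lastidx > 0}"

definition ball_minus :: "(real^'n::{finite,linorder}) set" where
  "ball_minus = {x \<in> ball 0 1. x $ lastidx < 0}"

definition flat_bdry :: "(real^'n::{finite,linorder}) set" where
  "flat_bdry = {x \<in> ball 0 1. x $ lastidx = 0}"

definition Gamma2 :: "(real^'n::{finite,linorder}) set" where
  "Gamma2 = {l. (\<Sum>i\<in>UNIV. l $ i) > 0 \<and>
                (\<Sum>i\<in>UNIV. \<Sum>j\<in>{j. i < j}. l $ i * l $ j) > 0}"

definition diag_mat :: "real^'n \<Rightarrow> real^'n^'n" where
  "diag_mat l = (\<chi> i j. if i = j then l $ i else 0)"

definition eigvals :: "real^'n^'n \<Rightarrow> real^'n \<Rightarrow> bool" where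
  "eigvals A l \<longleftrightarrow> (\<exists>Q. orthogonal_matrix Q \<and> A = Q ** diag_mat l ** transpose Q)"

text \<open>lambda(A) in the closure of Gamma_2^+ (Gamma_2^+ is permutation invariant,
so the choice of ordering of the eigenvalues is irrelevant).\<close>
definition eig_in_clGamma2 :: "real^('a::{finite,linorder})^('a::{finite,linorder}) \<Rightarrow> bool" where
  "eig_in_clGamma2 A \<longleftrightarrow> (\<exists>l. eigvals A l \<and> l \<in> closure Gamma2)"

text \<open>A_psi at a point, in terms of the value v = psi(x), gradient g and Hessian H.\<close>
definition schoutenA :: "real \<Rightarrow> real^'n \<Rightarrow> real^'n^'n \<Rightarrow> real^'n^'n" where
  "schoutenA v g H = (let n = real CARD('n) in
     (\<chi> i j. - (2 / (n - 2)) * (H $ i $ j) / v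
             + (2 * n / (n - 2)^2) * (g $ i * g $ j) / v^2
             - (2 / (n - 2)^2) * (norm g)^2 / v^2 * (if i = j then 1 else 0)))"

definition C2_data :: "(real^'n \<Rightarrow> real) \<Rightarrow> (real^'n \<Rightarrow> real^'n) \<Rightarrow> (real^'n \<Rightarrow> real^'n^'n)
    \<Rightarrow> (real^'n) set \<Rightarrow> bool" where
  "C2_data psi g H U \<longleftrightarrow> open U \<and>
     (\<forall>y\<in>U. (psi has_derivative (\<lambda>h. g y \<bullet> h)) (at y) \<and>
             (g has_derivative (\<lambda>h. H y *v h)) (at y)) \<and> continuous_on U H"

definition visc_super :: "(real^('n::{finite,linorder})) set \<Rightarrow> (real^('n::{finite,linorder}) \<Rightarrow> real) \<Rightarrow> bool" where
  "visc_super U u \<longleftrightarrow> (\<forall>x\<in>U. u x > 0) \<and> continuous_on U u \<and>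
     (\<forall>psi g H x e. x \<in> U \<and> e > 0 \<and> C2_data psi g H (ball x e) \<and>
        (\<forall>y \<in> ball x e \<inter> U. u y - psi y \<ge> 0) \<and> u x = psi x
        \<longrightarrow> eig_in_clGamma2 (schoutenA (psi x) (g x) (H x)))"

text \<open>Supersolution in D (= B_1^+ or B_1^-) with boundary condition
 s * du/dx_n = 0 on the flat boundary (s = -1 for B_1^+, s = 1 for B_1^-).\<close>
definition visc_super_bdry :: "real \<Rightarrow> (real^('n::{finite,linorder})) set \<Rightarrow> (real^('n::{finite,linorder}) \<Rightarrow> real) \<Rightarrow> bool" where
  "visc_super_bdry s D u \<longleftrightarrow> continuous_on (D \<union> flat_bdry) u \<and> visc_super D u \<and>
     (\<forall>psi g H x e. x \<in> flat_bdry \<and> e > 0 \<and> C2_data psi g H (ball x e) \<and>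
        (\<forall>y \<in> ball x e \<inter> (D \<union> flat_bdry). u y - psi y \<ge> 0) \<and> u x = psi x
        \<longrightarrow> eig_in_clGamma2 (schoutenA (psi x) (g x) (H x)) \<or> s * (g x $ lastidx) \<ge> 0)"

end

theory Submission
  imports Defs
begin

(* Away from the flat boundary the claim is the equation for u+ or u-. Let psi touch u from below
   at a point x0 of the flat boundary; then psi touches both u+ and u- from below on the closed half
   balls. If d psi/dx_n < 0, the Neumann condition of u- yields the equation at x0. Otherwise perturb
   psi to psi + d x_n - M |x - x0|^2 with 0 < d < M r: after a vertical shift it touches u+ from
   below on the closed half ball of radius r at a point that is either in B_1^+ or is x0 itself,
   where the normal derivative of the perturbation is now positive; so the conditions on u+ give
   the equation at that point. As M, d -> 0 the touching points tend to x0, and the equation passes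
   to the limit because the set of symmetric matrices with eigenvalues in the closure of Gamma_2^+
   is closed, the orthogonal group being compact. *)

lemma continuous_on_matrix_mult [continuous_intros]:
  fixes f :: "'a::topological_space \<Rightarrow> real^'m::finite^'n::finite" and g :: "'a \<Rightarrow> real^'k::finite^'m"
  assumes "continuous_on S f" "continuous_on S g"
  shows "continuous_on S (\<lambda>x. f x ** g x)"
  unfolding matrix_matrix_mult_def by (intro continuous_intros assms)

lemma continuous_on_transpose [continuous_intros]:
  fixes f :: "'a::topological_space \<Rightarrow> real^'m::finite^'n::finite"
  assumes "continuous_on S f"
  shows "continuous_on S (\<lambda>x. transpose (f x))"
  unfolding transpose_def by (intro continuous_intros assms)

lemma continuous_on_diag_mat [continuous_intros]:
  fixes f :: "'a::topological_space \<Rightarrow> real^'n::finite"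
  assumes "continuous_on S f"
  shows "continuous_on S (\<lambda>x. diag_mat (f x))"
  unfolding diag_mat_def
proof (intro continuous_on_vec_lambda)
  show "continuous_on S (\<lambda>x. if i = j then f x $ i else 0)" for i j
    by (cases "i = j") (simp_all add: continuous_on_component assms)
qed

lemma norm_orthogonal_matrix_le:
  fixes Q :: "real^'n::finite^'n"
  assumes "orthogonal_matrix Q"
  shows "norm Q \<le> real CARD('n)"
proof -
  have rows: "norm (Q $ i) = 1" for i
    using assms unfolding orthogonal_matrix_orthonormal_rows by (simp add: row_def)
  have "norm Q \<le> (\<Sum>i\<in>UNIV. norm (Q $ i))"
    unfolding norm_vec_def by (rule L2_set_le_sum) auto
  also have "\<dots> = real CARD('n)" using rows by simp
  finally show ?thesis .
qed

lemma compact_orthogonal_matrices: "compact {Q::real^'n::finite^'n. orthogonal_matrix Q}"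
proof (rule compact_eq_bounded_closed[THEN iffD2], rule conjI)
  show "bounded {Q::real^'n^'n. orthogonal_matrix Q}"
    using norm_orthogonal_matrix_le unfolding bounded_iff by blast
  show "closed {Q::real^'n^'n. orthogonal_matrix Q}"
    unfolding orthogonal_matrix_def by (intro closed_Collect_conj closed_Collect_eq continuous_intros)
qed

definition conj_diag :: "real^'n::finite^'n \<Rightarrow> real^'n^'n \<Rightarrow> real^'n" where
  "conj_diag Q A = (\<chi> i. (transpose Q ** A ** Q) $ i $ i)"

lemma continuous_on_conj_diag [continuous_intros]:
  fixes f g :: "'a::topological_space \<Rightarrow> real^'n::finite^'n"
  assumes "continuous_on S f" "continuous_on S g"
  shows "continuous_on S (\<lambda>x. conj_diag (f x) (g x))"
  unfolding conj_diag_def by (intro continuous_intros assms)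

lemma eigvals_iff_conj_diag:
  "eigvals A l \<longleftrightarrow>
     (\<exists>Q. orthogonal_matrix Q \<and> l = conj_diag Q A \<and> A = Q ** diag_mat l ** transpose Q)"
proof
  assume "eigvals A l"
  then obtain Q where Q: "orthogonal_matrix Q" "A = Q ** diag_mat l ** transpose Q"
    unfolding eigvals_def by blast
  then have "transpose Q ** A ** Q = (transpose Q ** Q) ** diag_mat l ** (transpose Q ** Q)"
    by (simp add: matrix_mul_assoc)
  also have "\<dots> = diag_mat l"
    using Q(1) unfolding orthogonal_matrix_def by simp
  finally have "l = conj_diag Q A"
    unfolding conj_diag_def diag_mat_def by (simp add: vec_eq_iff)
  with Q show "\<exists>Q. orthogonal_matrix Q \<and> l = conj_diag Q A \<and> A = Q ** diag_mat l ** transpose Q"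
    by blast
qed (auto simp: eigvals_def)

lemma closed_eigvals_in:
  fixes S :: "(real^'n::finite) set"
  assumes "closed S"
  shows "closed {A. \<exists>l\<in>S. eigvals A l}"
proof -
  define T where "T = {p. orthogonal_matrix (fst p) \<and> conj_diag (fst p) (snd p) \<in> S \<and>
    snd p = fst p ** diag_mat (conj_diag (fst p) (snd p)) ** transpose (fst p)}"
  have "{A. \<exists>l\<in>S. eigvals A l} = {A. \<exists>Q. Q \<in> {Q. orthogonal_matrix Q} \<and> (Q, A) \<in> T}"
    unfolding T_def eigvals_iff_conj_diag by auto
  moreover have "closed T"
  proof -
    have "continuous_on UNIV (\<lambda>p::(real^'n^'n) \<times> (real^'n^'n). conj_diag (fst p) (snd p))"
      by (intro continuous_intros)
    from closed_vimage[OF assms this]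
    have "closed {p::(real^'n^'n) \<times> (real^'n^'n). conj_diag (fst p) (snd p) \<in> S}"
      by (simp only: vimage_def)
    then show ?thesis
      unfolding T_def orthogonal_matrix_def
      by (intro closed_Collect_conj closed_Collect_eq continuous_intros)
  qed
  ultimately show ?thesis
    using closed_compact_projection[OF compact_orthogonal_matrices, of T] by simp
qed

lemma closed_eig_in_clGamma2:
  "closed {A::real^('n::{finite,linorder})^('n::{finite,linorder}). eig_in_clGamma2 A}"
  using closed_eigvals_in[OF closed_closure[of Gamma2]]
  unfolding eig_in_clGamma2_def by (simp add: Bex_def conj_commute)

lemma tendsto_schoutenA:
  fixes G :: "'a \<Rightarrow> real^'n::finite" and H :: "'a \<Rightarrow> real^'n^'n"
  assumes "(v \<longlongrightarrow> v0) F" "(G \<longlongrightarrow> G0) F" "(H \<longlongrightarrow> H0) F" "v0 \<noteq> 0"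
  shows "((\<lambda>k. schoutenA (v k) (G k) (H k)) \<longlongrightarrow> schoutenA v0 G0 H0) F"
  unfolding schoutenA_def Let_def by (intro tendsto_intros assms) (simp_all add: assms)

lemma eig_in_clGamma2_schoutenA_limit:
  fixes G :: "'a \<Rightarrow> real^('n::{finite,linorder})"
    and H :: "'a \<Rightarrow> real^('n::{finite,linorder})^('n::{finite,linorder})"
  assumes "(v \<longlongrightarrow> v0) F" "(G \<longlongrightarrow> G0) F" "(H \<longlongrightarrow> H0) F" "v0 \<noteq> 0" "F \<noteq> bot"
    and "\<forall>\<^sub>F k in F. eig_in_clGamma2 (schoutenA (v k) (G k) (H k))"
  shows "eig_in_clGamma2 (schoutenA v0 G0 H0)"
  using Lim_in_closed_set[OF closed_eig_in_clGamma2 _ assms(5) tendsto_schoutenA[OF assms(1-4)]]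
    assms(6) by simp

lemma C2_data_isCont:
  assumes "C2_data psi g H U" "y \<in> U"
  shows "isCont psi y" "isCont g y" "isCont H y"
proof -
  have "(psi has_derivative (\<lambda>h. g y \<bullet> h)) (at y)" "(g has_derivative (\<lambda>h. H y *v h)) (at y)"
    using assms unfolding C2_data_def by auto
  then show "isCont psi y" "isCont g y" by (auto dest: has_derivative_continuous)
  show "isCont H y"
    using assms unfolding C2_data_def by (auto simp: continuous_on_eq_continuous_at)
qed

lemma C2_data_perturb:
  fixes psi :: "real^'n::{finite,linorder} \<Rightarrow> real"
  assumes "C2_data psi g H U" "open V" "V \<subseteq> U"
  shows "C2_data (\<lambda>z. psi z + c + d * z $ lastidx - M * ((z - x0) \<bullet> (z - x0)))
     (\<lambda>z. g z + d *\<^sub>R axis lastidx 1 - (2 * M) *\<^sub>R (z - x0))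
     (\<lambda>z. H z - (2 * M) *\<^sub>R mat 1) V"
  unfolding C2_data_def
proof (intro conjI ballI)
  show "open V" by fact
  fix y assume "y \<in> V"
  then have "y \<in> U" using assms(3) by blast
  then have dpsi: "(psi has_derivative (\<lambda>h. g y \<bullet> h)) (at y)"
    and dg: "(g has_derivative (\<lambda>h. H y *v h)) (at y)"
    using assms(1) unfolding C2_data_def by auto
  have "((\<lambda>z. psi z + c + d * z $ lastidx - M * ((z - x0) \<bullet> (z - x0))) has_derivative
     (\<lambda>h. g y \<bullet> h + 0 + d * h $ lastidx - M * ((y - x0) \<bullet> h + h \<bullet> (y - x0)))) (at y)"
    by (rule derivative_eq_intros dpsi bounded_linear_imp_has_derivative bounded_linear_vec_nth
        | simp)+
  then show "((\<lambda>z. psi z + c + d * z $ lastidx - M * ((z - x0) \<bullet> (z - x0))) has_derivative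
     (\<lambda>h. (g y + d *\<^sub>R axis lastidx 1 - (2 * M) *\<^sub>R (y - x0)) \<bullet> h)) (at y)"
    by (rule has_derivative_eq_rhs)
      (auto simp: fun_eq_iff inner_add_left inner_diff_left inner_axis inner_commute algebra_simps)
  show "((\<lambda>z. g z + d *\<^sub>R axis lastidx 1 - (2 * M) *\<^sub>R (z - x0)) has_derivative
     (\<lambda>h. (H y - (2 * M) *\<^sub>R mat 1) *v h)) (at y)"
    by (rule has_derivative_eq_rhs, (rule derivative_eq_intros dg | simp)+)
      (simp add: fun_eq_iff matrix_vector_mult_diff_rdistrib scaleR_matrix_vector_assoc[symmetric])
next
  show "continuous_on V (\<lambda>z. H z - (2 * M) *\<^sub>R mat 1)"
    using assms unfolding C2_data_def by (auto intro!: continuous_intros intro: continuous_on_subset)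
qed

lemma visc_super_bdry_touching:
  assumes "visc_super_bdry s D u" "y \<in> D \<union> flat_bdry" "e > 0" "C2_data psi g H (ball y e)"
    and "\<forall>z\<in>ball y e \<inter> (D \<union> flat_bdry). u z - psi z \<ge> 0" "u y = psi y"
    and "y \<in> flat_bdry \<Longrightarrow> s * g y $ lastidx < 0"
  shows "eig_in_clGamma2 (schoutenA (psi y) (g y) (H y))"
proof (cases "y \<in> flat_bdry")
  case True
  with assms show ?thesis unfolding visc_super_bdry_def by fastforce
next
  case False
  with assms show ?thesis unfolding visc_super_bdry_def visc_super_def by blast
qed

lemma exists_min_closed_half_cball:
  fixes up phi :: "real^'n::{finite,linorder} \<Rightarrow> real"
  assumes "continuous_on (ball_plus \<union> flat_bdry) up" "continuous_on (cball x0 r) phi"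
    and "cball x0 r \<subseteq> ball 0 1" "x0 \<in> flat_bdry" "0 \<le> r"
  shows "\<exists>y\<in>cball x0 r \<inter> (ball_plus \<union> flat_bdry).
    \<forall>z\<in>cball x0 r \<inter> (ball_plus \<union> flat_bdry). up y - phi y \<le> up z - phi z"
proof (rule continuous_attains_inf)
  have "cball x0 r \<inter> (ball_plus \<union> flat_bdry) = cball x0 r \<inter> {z. z $ lastidx \<ge> 0}"
    using assms(3) unfolding ball_plus_def flat_bdry_def by auto
  then show "compact (cball x0 r \<inter> (ball_plus \<union> flat_bdry))"
    by (simp add: compact_Int_closed closed_Collect_le continuous_intros)
  show "cball x0 r \<inter> (ball_plus \<union> flat_bdry) \<noteq> {}" using assms(4,5) centre_in_cball[of x0 r] by blast
  show "continuous_on (cball x0 r \<inter> (ball_plus \<union> flat_bdry)) (\<lambda>z. up z - phi z)"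
    using assms(1,2) by (intro continuous_intros) (auto intro: continuous_on_subset)
qed

lemma perturbed_minimum_bounds:
  fixes y x0 :: "real^'n::{finite,linorder}"
  assumes y: "0 \<le> y $ lastidx" "norm (y - x0) \<le> r" and x0: "x0 $ lastidx = 0"
    and m: "M * ((y - x0) \<bullet> (y - x0)) - d * y $ lastidx \<le> m" "m \<le> 0"
    and M: "M > 0" and d: "d > 0" "d < M * r"
  shows "M * ((y - x0) \<bullet> (y - x0)) \<le> d * r" "-(d * r) \<le> m" "norm (y - x0) < r"
    and "y $ lastidx = 0 \<Longrightarrow> y = x0"
proof -
  have "y $ lastidx = (y - x0) $ lastidx" using x0 by simp
  also have "\<dots> \<le> norm (y - x0)" using component_le_norm_cart[of "y - x0" lastidx] by linarith
  finally have "d * y $ lastidx \<le> d * r" using y(2) d(1) by (intro mult_left_mono) auto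
  then show Mq: "M * ((y - x0) \<bullet> (y - x0)) \<le> d * r" using m by linarith
  have "0 \<le> M * ((y - x0) \<bullet> (y - x0))" using M by simp
  then show "-(d * r) \<le> m" using m(1) \<open>d * y $ lastidx \<le> d * r\<close> by linarith
  show "norm (y - x0) < r"
  proof (rule ccontr)
    assume "\<not> norm (y - x0) < r"
    then have "(y - x0) \<bullet> (y - x0) = r\<^sup>2"
      using y(2) by (metis order.antisym not_less power2_norm_eq_inner)
    moreover have "0 < r" using M d zero_less_mult_iff[of M r] by linarith
    ultimately have "M * r \<le> d" using Mq by (simp add: power2_eq_square)
    then show False using d by simp
  qed
  assume "y $ lastidx = 0"
  then have "M * ((y - x0) \<bullet> (y - x0)) \<le> 0" using m by simp
  then have "(y - x0) \<bullet> (y - x0) = 0" using M inner_ge_zero[of "y - x0"] by (simp add: mult_le_0_iff)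
  then show "y = x0" by simp
qed

lemma perturbed_touching_half_ball:
  fixes up psi :: "real^'n::{finite,linorder} \<Rightarrow> real"
  assumes bd: "visc_super_bdry (-1) ball_plus up"
    and C2: "C2_data psi g H (ball x0 e)"
    and x0: "x0 \<in> flat_bdry"
    and r: "0 < r" "r < e" "cball x0 r \<subseteq> ball 0 1"
    and touch: "\<forall>z\<in>cball x0 r \<inter> (ball_plus \<union> flat_bdry). up z - psi z \<ge> 0"
    and eq: "up x0 = psi x0"
    and gn: "g x0 $ lastidx \<ge> 0"
    and M: "M > 0" and d: "d > 0" "d < M * r"
  shows "\<exists>y m. M * ((y - x0) \<bullet> (y - x0)) \<le> d * r \<and> -(d * r) \<le> m \<and> m \<le> 0 \<and>
     eig_in_clGamma2 (schoutenA (psi y + m + d * y $ lastidx - M * ((y - x0) \<bullet> (y - x0)))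
        (g y + d *\<^sub>R axis lastidx 1 - (2 * M) *\<^sub>R (y - x0)) (H y - (2 * M) *\<^sub>R mat 1))"
proof -
  define K where "K = cball x0 r \<inter> (ball_plus \<union> flat_bdry)"
  define phi where "phi c z = psi z + c + d * z $ lastidx - M * ((z - x0) \<bullet> (z - x0))" for c z
  define gg where "gg z = g z + d *\<^sub>R axis lastidx 1 - (2 * M) *\<^sub>R (z - x0)" for z
  define HH where "HH z = H z - (2 * M) *\<^sub>R mat 1" for z
  have x0n: "x0 $ lastidx = 0" using x0 unfolding flat_bdry_def by simp
  have x0K: "x0 \<in> K" unfolding K_def using x0 r(1) by simp
  have "continuous_on (cball x0 r) psi"
    using r(2) C2_data_isCont(1)[OF C2] by (intro continuous_at_imp_continuous_on) auto
  then have "continuous_on (cball x0 r) (phi 0)" unfolding phi_def by (intro continuous_intros)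
  moreover have "continuous_on (ball_plus \<union> flat_bdry) up"
    using bd unfolding visc_super_bdry_def by blast
  ultimately have "\<exists>y\<in>K. \<forall>z\<in>K. up y - phi 0 y \<le> up z - phi 0 z"
    unfolding K_def using exists_min_closed_half_cball r(1,3) x0 less_imp_le by blast
  then obtain y where yK: "y \<in> K" and ymin: "\<And>z. z \<in> K \<Longrightarrow> up y - phi 0 y \<le> up z - phi 0 z"
    by blast
  define m where "m = up y - phi 0 y"
  have m0: "m \<le> 0" using ymin[OF x0K] eq x0n unfolding m_def phi_def by simp
  have m_ge: "M * ((y - x0) \<bullet> (y - x0)) - d * y $ lastidx \<le> m"
    using touch yK unfolding m_def phi_def K_def by auto
  have "0 \<le> y $ lastidx" "norm (y - x0) \<le> r"
    using yK unfolding K_def ball_plus_def flat_bdry_def by (auto simp: dist_norm norm_minus_commute)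
  note bounds = perturbed_minimum_bounds[OF this x0n m_ge m0 M d]
  have "dist x0 y < r" using bounds(3) by (simp add: dist_norm norm_minus_commute)
  define e' where "e' = r - dist x0 y"
  have "e' > 0" "ball y e' \<subseteq> ball x0 r"
    unfolding e'_def using \<open>dist x0 y < r\<close> by (auto simp: ball_subset_ball_iff dist_commute)
  have "eig_in_clGamma2 (schoutenA (phi m y) (gg y) (HH y))"
  proof (rule visc_super_bdry_touching[OF bd _ \<open>e' > 0\<close>])
    show "y \<in> ball_plus \<union> flat_bdry" using yK unfolding K_def by blast
    show "C2_data (phi m) gg HH (ball y e')"
      unfolding phi_def gg_def HH_def
      by (rule C2_data_perturb[OF C2]) (use \<open>ball y e' \<subseteq> ball x0 r\<close> r(2) in auto)
    show "\<forall>z\<in>ball y e' \<inter> (ball_plus \<union> flat_bdry). up z - phi m z \<ge> 0"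
      using ymin \<open>ball y e' \<subseteq> ball x0 r\<close> unfolding K_def m_def phi_def by force
    show "up y = phi m y" unfolding m_def phi_def by simp
    assume "y \<in> flat_bdry"
    then have "y = x0" using bounds(4) unfolding flat_bdry_def by simp
    \<comment> \<open>the term \<open>d x_n\<close> has made the normal derivative at \<open>x0\<close> positive\<close>
    then show "-1 * gg y $ lastidx < 0" using gn d unfolding gg_def by simp
  qed
  then show ?thesis
    using bounds(1,2) m0 unfolding phi_def gg_def HH_def by blast
qed

lemma perturbed_touching_half_ball_scaled:
  fixes up psi :: "real^'n::{finite,linorder} \<Rightarrow> real"
  assumes bd: "visc_super_bdry (-1) ball_plus up"
    and C2: "C2_data psi g H (ball x0 e)"
    and x0: "x0 \<in> flat_bdry"
    and r: "0 < r" "r < e" "cball x0 r \<subseteq> ball 0 1"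
    and touch: "\<forall>z\<in>cball x0 r \<inter> (ball_plus \<union> flat_bdry). up z - psi z \<ge> 0"
    and eq: "up x0 = psi x0"
    and gn: "g x0 $ lastidx \<ge> 0"
    and t: "0 < t" "t < 1"
  shows "\<exists>y m. norm (y - x0) \<le> r * t \<and> \<bar>m\<bar> \<le> r * t ^ 3 * r \<and>
     eig_in_clGamma2 (schoutenA (psi y + m + r * t ^ 3 * y $ lastidx - t * ((y - x0) \<bullet> (y - x0)))
        (g y + (r * t ^ 3) *\<^sub>R axis lastidx 1 - (2 * t) *\<^sub>R (y - x0)) (H y - (2 * t) *\<^sub>R mat 1))"
proof -
  have "t ^ 3 < t ^ 1" using t by (intro power_strict_decreasing) auto
  then have "0 < r * t ^ 3" "r * t ^ 3 < t * r" using t r(1) by (auto simp: mult.commute)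
  from perturbed_touching_half_ball[OF bd C2 x0 r touch eq gn t(1) this]
  obtain y m where bound: "t * ((y - x0) \<bullet> (y - x0)) \<le> r * t ^ 3 * r" "-(r * t ^ 3 * r) \<le> m" "m \<le> 0"
    and E: "eig_in_clGamma2 (schoutenA (psi y + m + r * t ^ 3 * y $ lastidx - t * ((y - x0) \<bullet> (y - x0)))
        (g y + (r * t ^ 3) *\<^sub>R axis lastidx 1 - (2 * t) *\<^sub>R (y - x0)) (H y - (2 * t) *\<^sub>R mat 1))"
    by blast
  have "t * (norm (y - x0))\<^sup>2 \<le> r * t ^ 3 * r"
    using bound(1) by (simp add: power2_norm_eq_inner)
  also have "\<dots> = t * (r * t)\<^sup>2" by (simp add: power2_eq_square power3_eq_cube)
  finally have "(norm (y - x0))\<^sup>2 \<le> (r * t)\<^sup>2" using t by simp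
  then have "norm (y - x0) \<le> r * t" using t r(1) by (simp add: power2_le_iff_abs_le)
  with bound(2,3) E show ?thesis by (intro exI[of _ y] exI[of _ m]) auto
qed

lemma visc_super_bdry_plus_flat_touching:
  fixes up psi :: "real^'n::{finite,linorder} \<Rightarrow> real"
  assumes bd: "visc_super_bdry (-1) ball_plus up"
    and C2: "C2_data psi g H (ball x0 e)" and e: "e > 0" and x0: "x0 \<in> flat_bdry"
    and touch: "\<forall>z\<in>ball x0 e \<inter> (ball_plus \<union> flat_bdry). up z - psi z \<ge> 0"
    and eq: "up x0 = psi x0" and gn: "g x0 $ lastidx \<ge> 0" and pos: "up x0 > 0"
  shows "eig_in_clGamma2 (schoutenA (psi x0) (g x0) (H x0))"
proof -
  obtain r where r: "0 < r" "r < e" "cball x0 r \<subseteq> ball 0 1"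
  proof -
    have "x0 \<in> ball 0 1" using x0 unfolding flat_bdry_def by simp
    then obtain r0 where "r0 > 0" "cball x0 r0 \<subseteq> ball 0 1"
      by (meson open_ball open_contains_cball)
    then show thesis
      using that[of "min r0 (e / 2)"] e cball_subset_cball_iff[of x0 "min r0 (e / 2)" x0 r0] by auto
  qed
  then have "\<forall>z\<in>cball x0 r \<inter> (ball_plus \<union> flat_bdry). up z - psi z \<ge> 0"
    using touch by auto
  from perturbed_touching_half_ball_scaled[OF bd C2 x0 r this eq gn]
  obtain Y mm where Y: "\<And>t. 0 < t \<Longrightarrow> t < 1 \<Longrightarrow>
     norm (Y t - x0) \<le> r * t \<and> \<bar>mm t\<bar> \<le> r * t ^ 3 * r \<and>
     eig_in_clGamma2 (schoutenA
        (psi (Y t) + mm t + r * t ^ 3 * Y t $ lastidx - t * ((Y t - x0) \<bullet> (Y t - x0)))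
        (g (Y t) + (r * t ^ 3) *\<^sub>R axis lastidx 1 - (2 * t) *\<^sub>R (Y t - x0))
        (H (Y t) - (2 * t) *\<^sub>R mat 1))"
    by metis
  have small: "\<forall>\<^sub>F t in at_right 0. 0 < t \<and> t < (1::real)"
    by (auto simp: eventually_at_right[of 0 1] intro!: exI[of _ 1])
  have "\<forall>\<^sub>F t in at_right 0. norm (Y t - x0) \<le> r * t"
    using small by (rule eventually_mono) (use Y in blast)
  then have "((\<lambda>t. Y t - x0) \<longlongrightarrow> 0) (at_right 0)"
    by (rule Lim_null_comparison) (auto intro!: tendsto_eq_intros)
  then have Ylim: "(Y \<longlongrightarrow> x0) (at_right 0)" by (rule LIM_zero_cancel)
  have "\<forall>\<^sub>F t in at_right 0. norm (mm t) \<le> r * t ^ 3 * r"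
    using small by (rule eventually_mono) (use Y in force)
  then have mlim: "(mm \<longlongrightarrow> 0) (at_right 0)"
    by (rule Lim_null_comparison) (auto intro!: tendsto_eq_intros)
  have tlim: "((\<lambda>t. t) \<longlongrightarrow> 0) (at_right (0::real))" by (rule tendsto_ident_at)
  have cont: "isCont psi x0" "isCont g x0" "isCont H x0"
    using C2_data_isCont[OF C2] e by auto
  show ?thesis
  proof (rule eig_in_clGamma2_schoutenA_limit)
    show "((\<lambda>t. psi (Y t) + mm t + r * t ^ 3 * Y t $ lastidx - t * ((Y t - x0) \<bullet> (Y t - x0)))
        \<longlongrightarrow> psi x0) (at_right 0)"
      by (rule tendsto_eq_intros isCont_tendsto_compose[OF cont(1) Ylim] mlim tlim Ylim refl | simp)+
    show "((\<lambda>t. g (Y t) + (r * t ^ 3) *\<^sub>R axis lastidx 1 - (2 * t) *\<^sub>R (Y t - x0))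
        \<longlongrightarrow> g x0) (at_right 0)"
      by (rule tendsto_eq_intros isCont_tendsto_compose[OF cont(2) Ylim] tlim Ylim refl | simp)+
    show "((\<lambda>t. H (Y t) - (2 * t) *\<^sub>R mat 1) \<longlongrightarrow> H x0) (at_right 0)"
      by (rule tendsto_eq_intros isCont_tendsto_compose[OF cont(3) Ylim] tlim refl | simp)+
    show "psi x0 \<noteq> 0" using eq pos by simp
    show "\<forall>\<^sub>F t in at_right 0. eig_in_clGamma2 (schoutenA
        (psi (Y t) + mm t + r * t ^ 3 * Y t $ lastidx - t * ((Y t - x0) \<bullet> (Y t - x0)))
        (g (Y t) + (r * t ^ 3) *\<^sub>R axis lastidx 1 - (2 * t) *\<^sub>R (Y t - x0))
        (H (Y t) - (2 * t) *\<^sub>R mat 1))"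
      using small by (rule eventually_mono) (use Y in blast)
  qed simp
qed

lemma closure_half_ball:
  fixes a :: "'a::euclidean_space"
  assumes "a \<noteq> 0" "r > 0"
  shows "closure (ball 0 r \<inter> {x. 0 < a \<bullet> x}) = cball 0 r \<inter> {x. 0 \<le> a \<bullet> x}"
proof -
  have "(r / 2 / norm a) *\<^sub>R a \<in> ball 0 r \<inter> {x. 0 < a \<bullet> x}"
    using assms by (simp add: inner_commute)
  then have "rel_interior (ball 0 r) \<inter> rel_interior {x. 0 < a \<bullet> x} \<noteq> {}"
    by (metis empty_iff open_ball open_halfspace_gt rel_interior_open)
  then have "closure (ball 0 r \<inter> {x. 0 < a \<bullet> x}) = closure (ball 0 r) \<inter> closure {x. 0 < a \<bullet> x}"
    by (intro closure_Int_convex convex_ball convex_halfspace_gt)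
  also have "\<dots> = cball 0 r \<inter> {x. 0 \<le> a \<bullet> x}"
    using assms by (simp add: closure_halfspace_gt)
  finally show ?thesis .
qed

lemma mem_closure_ball_plus:
  assumes "x \<in> ball 0 1" "0 \<le> x $ lastidx"
  shows "x \<in> closure ball_plus"
proof -
  have eq: "ball_plus = ball 0 1 \<inter> {x. 0 < axis lastidx 1 \<bullet> x}"
    unfolding ball_plus_def by (auto simp: inner_axis')
  show ?thesis
    unfolding eq using assms by (subst closure_half_ball) (auto simp: inner_axis')
qed

lemma mem_closure_ball_minus:
  assumes "x \<in> ball 0 1" "x $ lastidx \<le> 0"
  shows "x \<in> closure ball_minus"
proof -
  have eq: "ball_minus = ball 0 1 \<inter> {x. 0 < axis lastidx (-1) \<bullet> x}"
    unfolding ball_minus_def by (auto simp: inner_axis')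
  show ?thesis
    unfolding eq using assms by (subst closure_half_ball) (auto simp: inner_axis')
qed

definition glued ::
    "(real^('n::{finite,linorder}) \<Rightarrow> real) \<Rightarrow> (real^('n::{finite,linorder}) \<Rightarrow> real)
      \<Rightarrow> real^('n::{finite,linorder}) \<Rightarrow> real" where
  "glued up um x = (if x $ lastidx \<ge> 0 then up x else um x)"

lemma dist_across_flat_bdry:
  fixes up um :: "real^'n::{finite,linorder} \<Rightarrow> real"
  assumes Lp: "Cp-lipschitz_on (closure ball_plus) up" and Lm: "Cm-lipschitz_on (closure ball_minus) um"
    and agree: "\<forall>z\<in>flat_bdry. up z = um z"
    and x: "x \<in> ball 0 1" "x $ lastidx \<ge> 0" and y: "y \<in> ball 0 1" "y $ lastidx < 0"
  shows "dist (up x) (um y) \<le> max Cp Cm * dist x y"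
proof -
  \<comment> \<open>split the segment from \<open>x\<close> to \<open>y\<close> where it crosses the flat boundary\<close>
  define s where "s = x $ lastidx / (x $ lastidx - y $ lastidx)"
  have s: "0 \<le> s" "s < 1" unfolding s_def using x y by (auto simp: field_simps)
  define z where "z = (1 - s) *\<^sub>R x + s *\<^sub>R y"
  have "z \<in> ball 0 1"
    unfolding z_def by (rule convexD[OF convex_ball x(1) y(1)]) (use s in auto)
  moreover have "z $ lastidx = 0"
    unfolding z_def s_def using x(2) y(2) by (simp add: field_simps)
  ultimately have zf: "z \<in> flat_bdry" unfolding flat_bdry_def by simp
  have "x - z = s *\<^sub>R (x - y)" "z - y = (1 - s) *\<^sub>R (x - y)"
    unfolding z_def by (simp_all add: algebra_simps)
  then have dxz: "dist x z = s * dist x y" and dzy: "dist z y = (1 - s) * dist x y"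
    using s by (simp_all add: dist_norm)
  have "x \<in> closure ball_plus" "z \<in> closure ball_plus" "z \<in> closure ball_minus" "y \<in> closure ball_minus"
    using x y zf unfolding flat_bdry_def
    by (auto intro: mem_closure_ball_plus mem_closure_ball_minus)
  then have "dist (up x) (up z) \<le> Cp * dist x z" "dist (um z) (um y) \<le> Cm * dist z y"
    using lipschitz_onD[OF Lp] lipschitz_onD[OF Lm] by auto
  moreover have "Cp * dist x z \<le> max Cp Cm * dist x z" "Cm * dist z y \<le> max Cp Cm * dist z y"
    by (simp_all add: mult_right_mono)
  moreover have "dist (up x) (um y) \<le> dist (up x) (up z) + dist (um z) (um y)"
    using agree zf dist_triangle[of "up x" "um y" "up z"] by simp
  ultimately have "dist (up x) (um y) \<le> max Cp Cm * dist x z + max Cp Cm * dist z y" by linarith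
  also have "\<dots> = max Cp Cm * dist x y" unfolding dxz dzy by (simp add: algebra_simps)
  finally show ?thesis .
qed

lemma lipschitz_on_glued:
  fixes up um :: "real^'n::{finite,linorder} \<Rightarrow> real"
  assumes Lp: "Cp-lipschitz_on (closure ball_plus) up" and Lm: "Cm-lipschitz_on (closure ball_minus) um"
    and agree: "\<forall>z\<in>flat_bdry. up z = um z"
  shows "(max Cp Cm)-lipschitz_on (ball 0 1) (glued up um)"
proof (rule lipschitz_onI)
  show "0 \<le> max Cp Cm" using lipschitz_on_nonneg[OF Lp] by simp
  fix x y :: "real^('n::{finite,linorder})" assume x: "x \<in> ball 0 1" and y: "y \<in> ball 0 1"
  have "Cp * dist x y \<le> max Cp Cm * dist x y" "Cm * dist x y \<le> max Cp Cm * dist x y"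
    by (simp_all add: mult_right_mono)
  then show "dist (glued up um x) (glued up um y) \<le> max Cp Cm * dist x y"
    using x y lipschitz_onD[OF Lp mem_closure_ball_plus mem_closure_ball_plus, of x y]
      lipschitz_onD[OF Lm mem_closure_ball_minus mem_closure_ball_minus, of x y]
      dist_across_flat_bdry[OF Lp Lm agree x _ y] dist_across_flat_bdry[OF Lp Lm agree y _ x]
    unfolding glued_def by (auto simp: dist_commute)
qed

lemma visc_super_glued:
  fixes up um :: "real^'n::{finite,linorder} \<Rightarrow> real"
  assumes bdp: "visc_super_bdry (-1) ball_plus up" and bdm: "visc_super_bdry 1 ball_minus um"
    and agree: "\<forall>z\<in>flat_bdry. up z = um z"
    and pos: "\<forall>x\<in>ball 0 1. glued up um x > 0" and cont: "continuous_on (ball 0 1) (glued up um)"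
  shows "visc_super (ball 0 1) (glued up um)"
  unfolding visc_super_def
proof (intro conjI pos cont allI impI, elim conjE)
  fix psi g H x e
  assume x: "x \<in> ball 0 1" and e: "0 < e" and C2: "C2_data psi g H (ball x e)"
    and touch: "\<forall>y\<in>ball x e \<inter> ball 0 1. glued up um y - psi y \<ge> 0" and eq: "glued up um x = psi x"
  have touch_p: "\<forall>z\<in>ball x e \<inter> (ball_plus \<union> flat_bdry). up z - psi z \<ge> 0"
    using touch unfolding glued_def ball_plus_def flat_bdry_def by force
  have touch_m: "\<forall>z\<in>ball x e \<inter> (ball_minus \<union> flat_bdry). um z - psi z \<ge> 0"
    using touch agree unfolding glued_def ball_minus_def flat_bdry_def by force
  consider "x \<in> ball_plus" | "x \<in> ball_minus" | "x \<in> flat_bdry"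
    using x unfolding ball_plus_def ball_minus_def flat_bdry_def by force
  then show "eig_in_clGamma2 (schoutenA (psi x) (g x) (H x))"
  proof cases
    case 1
    then show ?thesis
      using visc_super_bdry_touching[OF bdp _ e C2 touch_p] eq
      unfolding glued_def ball_plus_def flat_bdry_def by auto
  next
    case 2
    then show ?thesis
      using visc_super_bdry_touching[OF bdm _ e C2 touch_m] eq
      unfolding glued_def ball_minus_def flat_bdry_def by auto
  next
    case 3
    then have "up x = psi x" "um x = psi x" "up x > 0"
      using eq agree pos x unfolding glued_def flat_bdry_def by force+
    show ?thesis
    proof (cases "g x $ lastidx \<ge> 0")
      case True
      then show ?thesis
        using visc_super_bdry_plus_flat_touching[OF bdp C2 e 3 touch_p] \<open>up x = psi x\<close> \<open>up x > 0\<close>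
        by blast
    next
      case False
      then show ?thesis
        using visc_super_bdry_touching[OF bdm _ e C2 touch_m \<open>um x = psi x\<close>] 3 by simp
    qed
  qed
qed

theorem mainTheorem9:
  fixes up um :: "real^'n::{finite,linorder} \<Rightarrow> real"
  assumes "CARD('n) \<ge> 3"
    and "\<exists>C. C-lipschitz_on (closure ball_plus) up"
    and "\<exists>C. C-lipschitz_on (closure ball_minus) um"
    and "\<forall>x\<in>closure ball_plus. up x > 0"
    and "\<forall>x\<in>closure ball_minus. um x > 0"
    and "\<forall>x\<in>flat_bdry. up x = um x"
    and "visc_super_bdry (-1) ball_plus up"
    and "visc_super_bdry 1 ball_minus um"
  shows "(\<exists>C. C-lipschitz_on (ball 0 1) (\<lambda>x. if x $ lastidx \<ge> 0 then up x else um x))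
    \<and> visc_super (ball 0 1) (\<lambda>x. if x $ lastidx \<ge> 0 then up x else um x)"
proof -
  obtain Cp Cm where "Cp-lipschitz_on (closure ball_plus) up" "Cm-lipschitz_on (closure ball_minus) um"
    using assms(2,3) by blast
  then have lip: "(max Cp Cm)-lipschitz_on (ball 0 1) (glued up um)"
    using lipschitz_on_glued assms(6) by blast
  have "\<forall>x\<in>ball 0 1. glued up um x > 0"
    using assms(4,5) mem_closure_ball_plus mem_closure_ball_minus unfolding glued_def by force
  then have "visc_super (ball 0 1) (glued up um)"
    using visc_super_glued[OF assms(7,8,6)] lipschitz_on_continuous_on[OF lip] by blast
  then show ?thesis
    using lip unfolding glued_def by blast
qed

end
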